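(* Let $m\in[1..\frac n2-1]$ and let $\tau=(\tau_i)_{i\in[1..n]}\in\{\frac1n,\frac12,1-\frac1n\}^n$. Let $x,y\in\{0,1\}^n$ be sampled independently from the distribution associated with $\tau$, and let $z$ be the winner of $x$ and $y$ with respect to $\mathrm{DLB}$ (the one with larger $\mathrm{DLB}$-value, chosen uniformly at random among the two in case of a tie). Then, conditioned on $\{\min\{\mathrm{DLB}(x),\mathrm{DLB}(y)\}\ge 2m\}$, we have $z_{2m+1}=1$ with probability $$p(\tau_{2m+1},\tau_{2m+2})=\tau_{2m+1}\left(-\tau_{2m+2}^2+3\tau_{2m+2}+(\tau_{2m+2}^2-3\tau_{2m+2}+1)\tau_{2m+1}\right).$$ If $\tau_{2m+1},\tau_{2m+2}\in\{\frac12,1-\frac1n\}$, then $p(\tau_{2m+1},\tau_{2m+2})\ge\tau_{2m+1}$. If moreover $\tau_{2m+1}=\frac12$ and $\tau_{2m+2}\in\{\frac12,1-\frac1n\}$, then $p(\tau_{2m+1},\tau_{2m+2})\ge\frac9{16}$.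
   Context: Let $n$ be an even positive integer. For $x\in\{0,1\}^n$ consider the blocks $(x_{2\ell+1},x_{2\ell+2})$, $\ell=0,\dots,\frac n2-1$. If $x\neq(1,\dots,1)$, let $m$ be the smallest $\ell$ with $x_{2\ell+1}\neq 1$ or $x_{2\ell+2}\neq 1$, and define $\mathrm{DLB}(x)=2m+1$ if $x_{2m+1}+x_{2m+2}=0$ and $\mathrm{DLB}(x)=2m$ if $x_{2m+1}+x_{2m+2}=1$; set $\mathrm{DLB}(1,\dots,1)=n$. The distribution on $\{0,1\}^n$ associated with a frequency vector $\tau\in[0,1]^n$ is the one in which each bit $x_i$ is independently $1$ with probability $\tau_i$ and $0$ otherwise. *)

theory Defs
  imports "HOL-Probability.Probability"
begin

text \<open>Bit strings x in {0,1}^n are functions nat => bool, indexed 1..n (True = 1).\<close>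

definition DLB :: "nat \<Rightarrow> (nat \<Rightarrow> bool) \<Rightarrow> nat" where
  "DLB n x =
     (if (\<forall>l < n div 2. x (2*l+1) \<and> x (2*l+2)) then n
      else (let k = (LEAST l. \<not> (x (2*l+1) \<and> x (2*l+2))) in
            if \<not> x (2*k+1) \<and> \<not> x (2*k+2) then 2*k+1 else 2*k))"

definition freq_dist :: "nat \<Rightarrow> (nat \<Rightarrow> real) \<Rightarrow> (nat \<Rightarrow> bool) pmf" where
  "freq_dist n \<tau> = Pi_pmf {1..n} False (\<lambda>i. bernoulli_pmf (\<tau> i))"

definition winner :: "nat \<Rightarrow> (nat \<Rightarrow> bool) \<Rightarrow> (nat \<Rightarrow> bool) \<Rightarrow> (nat \<Rightarrow> bool) pmf" where
  "winner n x y =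
     (if DLB n x > DLB n y then return_pmf x
      else if DLB n y > DLB n x then return_pmf y
      else map_pmf (\<lambda>b. if b then x else y) (bernoulli_pmf (1/2)))"

definition tournament :: "nat \<Rightarrow> (nat \<Rightarrow> real) \<Rightarrow> ((nat \<Rightarrow> bool) \<times> (nat \<Rightarrow> bool) \<times> (nat \<Rightarrow> bool)) pmf" where
  "tournament n \<tau> =
     do { x \<leftarrow> freq_dist n \<tau>; y \<leftarrow> freq_dist n \<tau>; z \<leftarrow> winner n x y; return_pmf (x, y, z) }"

definition cond_prob :: "'a pmf \<Rightarrow> 'a set \<Rightarrow> 'a set \<Rightarrow> real" where
  "cond_prob M A B = measure_pmf.prob M (A \<inter> B) / measure_pmf.prob M B"

definition p_fun :: "real \<Rightarrow> real \<Rightarrow> real" where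
  "p_fun a t = a * (- (t^2) + 3*t + (t^2 - 3*t + 1) * a)"

end

theory Submission
  imports Defs
begin

(* Condition on both parents having their first m blocks equal to (1,1). Then the DLB
   comparison of x and y is decided by block m alone, ranked (1,1) > (0,0) > mixed; if both
   blocks are (1,1) the comparison is decided further right, but then bit 2m+1 of the winner
   is 1 either way. Under the product distribution block m is independent of the prefix
   event, so its probability (squared, for the two parents) cancels in the conditional
   probability, which becomes the outcome of a duel of two independent blocks with bit
   probabilities tau_(2m+1) and tau_(2m+2); summing over the 16 outcomes gives p. Both
   inequalities reduce to 3t - t^2 >= 5/4 for t in [1/2, 1]. *)

lemma measure_bind_pmf:
  "measure_pmf.prob (bind_pmf M f) A = (\<integral>x. measure_pmf.prob (f x) A \<partial>M)"
  unfolding measure_pmf_bind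
  by (rule measure_pmf.measure_bind[where N="count_space UNIV"])
     (auto simp: measurable_pmf_measure1 space_subprob_algebra measure_pmf.subprob_space_axioms)

lemma Pi_pmf_map_pair_independent:
  assumes "finite I" "J \<subseteq> I"
    and h: "\<And>x y. (\<forall>i\<in>J. x i = y i) \<Longrightarrow> h x = h y"
    and f: "\<And>x y. (\<forall>i. i \<notin> J \<longrightarrow> x i = y i) \<Longrightarrow> f x = f y"
  shows "map_pmf (\<lambda>x. (h x, f x)) (Pi_pmf I d p)
       = pair_pmf (map_pmf h (Pi_pmf I d p)) (map_pmf f (Pi_pmf I d p))"
proof -
  let ?P = "pair_pmf (Pi_pmf J d p) (Pi_pmf (I - J) d p)"
  let ?merge = "\<lambda>(u, v) i. if i \<in> J then u i else v i"
  have "J \<union> (I - J) = I" using assms(2) by blast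
  then have Pi: "Pi_pmf I d p = map_pmf ?merge ?P"
    using Pi_pmf_union[of J "I - J" d p] assms(1,2) by (simp add: finite_subset)
  have h_merge: "h (?merge uv) = h (fst uv)" for uv
    by (cases uv) (auto intro: h)
  have f_merge: "f (?merge uv) = f (snd uv)" for uv
    by (cases uv) (auto intro: f)
  have "map_pmf (\<lambda>x. (h x, f x)) (Pi_pmf I d p) = map_pmf (\<lambda>(u, v). (h u, f v)) ?P"
    unfolding Pi pmf.map_comp o_def h_merge f_merge by (simp add: case_prod_unfold)
  also have "\<dots> = pair_pmf (map_pmf h (Pi_pmf J d p)) (map_pmf f (Pi_pmf (I - J) d p))"
    by (rule map_pair)
  also have "map_pmf h (Pi_pmf J d p) = map_pmf h (Pi_pmf I d p)"
    unfolding Pi pmf.map_comp o_def h_merge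
    by (simp add: pmf.map_comp[symmetric, unfolded o_def] map_fst_pair_pmf)
  also have "map_pmf f (Pi_pmf (I - J) d p) = map_pmf f (Pi_pmf I d p)"
    unfolding Pi pmf.map_comp o_def f_merge
    by (simp add: pmf.map_comp[symmetric, unfolded o_def] map_snd_pair_pmf)
  finally show ?thesis .
qed

lemma integral_pair_pmf:
  fixes f :: "'a::finite \<times> 'b::finite \<Rightarrow> real"
  shows "(\<integral>z. f z \<partial>pair_pmf A B) = (\<integral>a. \<integral>b. f (a, b) \<partial>B \<partial>A)"
proof -
  have "(\<integral>z. f z \<partial>pair_pmf A B) = (\<Sum>z\<in>UNIV. f z * pmf (pair_pmf A B) z)"
    by (rule integral_measure_pmf_real) auto
  also have "\<dots> = (\<Sum>a\<in>UNIV. \<Sum>b\<in>UNIV. f (a, b) * (pmf A a * pmf B b))"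
    using pmf_pair[of A B "fst z" "snd z" for z]
    by (subst sum.cartesian_product) (simp add: case_prod_beta)
  also have "\<dots> = (\<integral>a. \<integral>b. f (a, b) \<partial>B \<partial>A)"
    by (simp add: integral_measure_pmf_real[of UNIV] sum_distrib_left mult_ac)
  finally show ?thesis .
qed

lemma integral_independent_mult:
  fixes f :: "'b::finite \<Rightarrow> real" and h :: "'c::finite \<Rightarrow> real"
  assumes "map_pmf (\<lambda>x. (\<beta> x, \<gamma> x)) M = pair_pmf (map_pmf \<beta> M) (map_pmf \<gamma> M)"
  shows "(\<integral>x. f (\<beta> x) * h (\<gamma> x) \<partial>M)
       = (\<integral>b. f b \<partial>map_pmf \<beta> M) * (\<integral>c. h c \<partial>map_pmf \<gamma> M)"
proof -
  have "(\<integral>x. f (\<beta> x) * h (\<gamma> x) \<partial>M)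
      = (\<integral>z. f (fst z) * h (snd z) \<partial>map_pmf (\<lambda>x. (\<beta> x, \<gamma> x)) M)"
    by simp
  also have "\<dots> = (\<integral>b. \<integral>c. f b * h c \<partial>map_pmf \<gamma> M \<partial>map_pmf \<beta> M)"
    by (simp only: assms integral_pair_pmf fst_conv snd_conv)
  finally show ?thesis by simp
qed

lemma integral_guarded_iid:
  fixes \<beta> :: "'a \<Rightarrow> 'b::finite" and F :: "'b \<Rightarrow> 'b \<Rightarrow> real"
  assumes indep: "map_pmf (\<lambda>x. (\<beta> x, g x)) M = pair_pmf (map_pmf \<beta> M) (map_pmf g M)"
  shows "(\<integral>x. \<integral>y. of_bool (g x \<and> g y) * F (\<beta> x) (\<beta> y) \<partial>M \<partial>M)
       = (measure_pmf.prob M {x. g x})\<^sup>2 * (\<integral>b. \<integral>b'. F b b' \<partial>map_pmf \<beta> M \<partial>map_pmf \<beta> M)"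
proof -
  let ?\<gamma> = "measure_pmf.prob M {x. g x}"
  let ?\<Phi> = "\<lambda>b. \<integral>b'. F b b' \<partial>map_pmf \<beta> M"
  have "(\<integral>c. of_bool c \<partial>map_pmf g M) = (\<integral>x. indicator {x. g x} x \<partial>M :: real)"
    by (simp add: indicator_def)
  then have guard: "(\<integral>c. of_bool c \<partial>map_pmf g M) = ?\<gamma>"
    by simp
  have inner: "(\<integral>y. F b (\<beta> y) * of_bool (g y) \<partial>M) = ?\<Phi> b * ?\<gamma>" for b
    using integral_independent_mult[OF indep, of "F b" of_bool] guard by simp
  have "(\<integral>x. \<integral>y. of_bool (g x \<and> g y) * F (\<beta> x) (\<beta> y) \<partial>M \<partial>M)
      = (\<integral>x. of_bool (g x) * (\<integral>y. F (\<beta> x) (\<beta> y) * of_bool (g y) \<partial>M) \<partial>M)"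
    by (simp add: of_bool_conj mult_ac flip: integral_mult_right_zero)
  also have "\<dots> = (\<integral>x. (?\<Phi> (\<beta> x) * of_bool (g x)) * ?\<gamma> \<partial>M)"
    unfolding inner by (simp only: mult_ac)
  also have "\<dots> = (\<integral>x. ?\<Phi> (\<beta> x) * of_bool (g x) \<partial>M) * ?\<gamma>"
    by (rule integral_mult_left_zero)
  also have "\<dots> = ?\<gamma>\<^sup>2 * (\<integral>b. ?\<Phi> b \<partial>map_pmf \<beta> M)"
    using integral_independent_mult[OF indep, of ?\<Phi> of_bool] guard by (simp add: power2_eq_square)
  finally show ?thesis .
qed

definition leading_blocks_ones :: "nat \<Rightarrow> (nat \<Rightarrow> bool) \<Rightarrow> bool" where
  "leading_blocks_ones m x \<longleftrightarrow> (\<forall>l<m. x (2*l+1) \<and> x (2*l+2))"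

lemma leading_blocks_ones_iff: "leading_blocks_ones m x \<longleftrightarrow> (\<forall>i\<in>{1..2*m}. x i)"
proof
  assume lead: "leading_blocks_ones m x"
  show "\<forall>i\<in>{1..2*m}. x i"
  proof
    fix i assume i: "i \<in> {1..2*m}"
    define l where "l = (i - 1) div 2"
    have "l < m" and "i = 2*l+1 \<or> i = 2*l+2" using i unfolding l_def by auto
    then show "x i" using lead unfolding leading_blocks_ones_def by blast
  qed
qed (auto simp: leading_blocks_ones_def)

lemma DLB_first_defect:
  assumes "l < n div 2" "leading_blocks_ones l x" "\<not> (x (2*l+1) \<and> x (2*l+2))"
  shows "DLB n x = (if x (2*l+1) \<or> x (2*l+2) then 2*l else 2*l+1)"
proof -
  have "(LEAST k. \<not> (x (2*k+1) \<and> x (2*k+2))) = l"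
    using assms(2,3) by (intro Least_equality) (auto simp: leading_blocks_ones_def not_le[symmetric])
  with assms show ?thesis by (auto simp: DLB_def Let_def)
qed

lemma DLB_ge_iff:
  assumes "m \<le> n div 2"
  shows "2*m \<le> DLB n x \<longleftrightarrow> leading_blocks_ones m x"
proof (cases "\<forall>l < n div 2. x (2*l+1) \<and> x (2*l+2)")
  case True
  with assms show ?thesis by (auto simp: DLB_def leading_blocks_ones_def)
next
  case False
  then obtain l where l: "l < n div 2" "\<not> (x (2*l+1) \<and> x (2*l+2))" by blast
  define k where "k = (LEAST k. \<not> (x (2*k+1) \<and> x (2*k+2)))"
  have defect: "\<not> (x (2*k+1) \<and> x (2*k+2))"
    unfolding k_def using l(2) by (rule LeastI)
  have "k \<le> l"
    unfolding k_def using l(2) by (rule Least_le)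
  have below: "leading_blocks_ones k x"
    unfolding leading_blocks_ones_def k_def using not_less_Least by blast
  have "DLB n x \<in> {2*k, 2*k+1}"
    using DLB_first_defect[OF _ below defect] \<open>k \<le> l\<close> l(1) by simp
  then have "2*m \<le> DLB n x \<longleftrightarrow> m \<le> k" by auto
  also have "\<dots> \<longleftrightarrow> leading_blocks_ones m x"
    using defect below unfolding leading_blocks_ones_def by (meson less_le_trans not_le)
  finally show ?thesis .
qed

definition block :: "nat \<Rightarrow> (nat \<Rightarrow> bool) \<Rightarrow> bool \<times> bool" where
  "block l x = (x (2*l+1), x (2*l+2))"

fun block_rank :: "bool \<times> bool \<Rightarrow> nat" where
  "block_rank (u, v) = (if u \<and> v then 2 else if u \<or> v then 0 else 1)"

lemma block_rank_le_2: "block_rank b \<le> 2"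
  by (cases b) simp

lemma DLB_at_block:
  assumes "m < n div 2" "leading_blocks_ones m x"
  shows "2*m + block_rank (block m x) \<le> DLB n x"
    and "block_rank (block m x) < 2 \<Longrightarrow> DLB n x = 2*m + block_rank (block m x)"
proof -
  show "block_rank (block m x) < 2 \<Longrightarrow> DLB n x = 2*m + block_rank (block m x)"
    using DLB_first_defect[OF assms] by (auto simp: block_def)
  show "2*m + block_rank (block m x) \<le> DLB n x"
  proof (cases "x (2*m+1) \<and> x (2*m+2)")
    case True
    with assms(2) have "leading_blocks_ones (Suc m) x"
      by (auto simp: leading_blocks_ones_def less_Suc_eq)
    with assms(1) True show ?thesis
      using DLB_ge_iff[of "Suc m" n x] by (simp add: block_def)
  next
    case False
    with DLB_first_defect[OF assms False] show ?thesis
      by (auto simp: block_def)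
  qed
qed

definition win_bit_prob :: "nat \<Rightarrow> nat \<Rightarrow> bool \<Rightarrow> bool \<Rightarrow> real" where
  "win_bit_prob r s b c =
     (if s < r then of_bool b else if r < s then of_bool c else (of_bool b + of_bool c) / 2)"

lemma prob_fair_choice_bit:
  "measure_pmf.prob (map_pmf (\<lambda>b. if b then x else y) (bernoulli_pmf (1/2))) {z. z i}
     = (of_bool (x i) + of_bool (y i)) / 2" (is "?l = ?r")
proof -
  have "?l = measure_pmf.prob (bernoulli_pmf (1/2)) {b. if b then x i else y i}"
    by (simp add: vimage_def if_distrib)
  also have "\<dots> = ?r"
  proof (cases "x i"; cases "y i")
    assume "x i" "y i" then show ?thesis by simp
  next
    assume "x i" "\<not> y i"
    then have "{b. if b then x i else y i} = {True}" by auto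
    then show ?thesis using \<open>x i\<close> \<open>\<not> y i\<close> by (simp add: measure_pmf_single)
  next
    assume "\<not> x i" "y i"
    then have "{b. if b then x i else y i} = {False}" by auto
    then show ?thesis using \<open>\<not> x i\<close> \<open>y i\<close> by (simp add: measure_pmf_single)
  next
    assume "\<not> x i" "\<not> y i" then show ?thesis by simp
  qed
  finally show ?thesis .
qed

lemma prob_winner_bit:
  "measure_pmf.prob (winner n x y) {z. z i} = win_bit_prob (DLB n x) (DLB n y) (x i) (y i)"
proof -
  consider "DLB n y < DLB n x" | "DLB n x < DLB n y" | "DLB n x = DLB n y" by linarith
  then show ?thesis
  proof cases
    case 3
    then have "winner n x y = map_pmf (\<lambda>b. if b then x else y) (bernoulli_pmf (1/2))"
      by (simp add: winner_def)
    with 3 show ?thesis by (simp only: prob_fair_choice_bit) (simp add: win_bit_prob_def)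
  qed (simp_all add: winner_def win_bit_prob_def)
qed

lemma win_bit_prob_at_block:
  assumes "m < n div 2" "leading_blocks_ones m x" "leading_blocks_ones m y"
  shows "win_bit_prob (DLB n x) (DLB n y) (x (2*m+1)) (y (2*m+1))
       = win_bit_prob (block_rank (block m x)) (block_rank (block m y)) (x (2*m+1)) (y (2*m+1))"
proof (cases "block_rank (block m x) = 2 \<and> block_rank (block m y) = 2")
  case True
  then have "x (2*m+1)" "y (2*m+1)"
    by (auto simp: block_def split: if_splits)
  then show ?thesis by (simp add: win_bit_prob_def)
next
  case False
  have rank_order: "(d < e \<longleftrightarrow> r < s) \<and> (e < d \<longleftrightarrow> s < r)"
    if "r \<le> 2" "s \<le> 2" "\<not> (r = 2 \<and> s = 2)" "c + r \<le> d" "r < 2 \<Longrightarrow> d = c + r"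
      "c + s \<le> e" "s < 2 \<Longrightarrow> e = c + s" for r s d e c :: nat
    using that by (cases "r < 2"; cases "s < 2") auto
  have "(DLB n x < DLB n y \<longleftrightarrow> block_rank (block m x) < block_rank (block m y))
      \<and> (DLB n y < DLB n x \<longleftrightarrow> block_rank (block m y) < block_rank (block m x))"
    by (rule rank_order[OF block_rank_le_2 block_rank_le_2 False
          DLB_at_block[OF assms(1,2)] DLB_at_block[OF assms(1,3)]])
  then show ?thesis by (simp only: win_bit_prob_def)
qed

lemma freq_dist_bit:
  "i \<in> {1..n} \<Longrightarrow> map_pmf (\<lambda>x. x i) (freq_dist n \<tau>) = bernoulli_pmf (\<tau> i)"
  by (simp add: freq_dist_def Pi_pmf_component)

lemma freq_dist_block:
  assumes "2*m+2 \<le> n"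
  shows "map_pmf (block m) (freq_dist n \<tau>)
       = pair_pmf (bernoulli_pmf (\<tau> (2*m+1))) (bernoulli_pmf (\<tau> (2*m+2)))"
proof -
  have "map_pmf (block m) (freq_dist n \<tau>)
      = map_pmf (\<lambda>x. (x (2*m+1), x (2*m+2))) (freq_dist n \<tau>)"
    by (simp add: block_def[abs_def])
  also have "\<dots> = pair_pmf (map_pmf (\<lambda>x. x (2*m+1)) (freq_dist n \<tau>))
                          (map_pmf (\<lambda>x. x (2*m+2)) (freq_dist n \<tau>))"
    unfolding freq_dist_def using assms
    by (intro Pi_pmf_map_pair_independent[where J="{2*m+1}"]) auto
  finally show ?thesis
    using assms by (simp add: freq_dist_bit)
qed

lemma freq_dist_block_indep_leading:
  assumes "2*m+2 \<le> n"
  shows "map_pmf (\<lambda>x. (block m x, leading_blocks_ones m x)) (freq_dist n \<tau>)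
       = pair_pmf (map_pmf (block m) (freq_dist n \<tau>))
                  (map_pmf (leading_blocks_ones m) (freq_dist n \<tau>))"
  unfolding freq_dist_def using assms
  by (intro Pi_pmf_map_pair_independent[where J="{2*m+1, 2*m+2}"])
     (auto simp: block_def leading_blocks_ones_iff)

lemma prob_leading_blocks_ones:
  assumes "2*m \<le> n" "\<forall>i\<in>{1..2*m}. 0 \<le> \<tau> i \<and> \<tau> i \<le> 1"
  shows "measure_pmf.prob (freq_dist n \<tau>) {x. leading_blocks_ones m x} = (\<Prod>i=1..2*m. \<tau> i)"
proof -
  have "{x. leading_blocks_ones m x} = Pi {1..n} (\<lambda>i. if i \<le> 2*m then {True} else UNIV)"
    using assms(1) by (auto simp: leading_blocks_ones_iff Pi_def)
  then have "measure_pmf.prob (freq_dist n \<tau>) {x. leading_blocks_ones m x}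
      = (\<Prod>i=1..n. measure_pmf.prob (bernoulli_pmf (\<tau> i)) (if i \<le> 2*m then {True} else UNIV))"
    by (simp add: freq_dist_def measure_Pi_pmf_Pi)
  also have "\<dots> = (\<Prod>i=1..n. if i \<le> 2*m then \<tau> i else 1)"
    using assms by (intro prod.cong) (auto simp: measure_pmf_single)
  also have "\<dots> = (\<Prod>i=1..2*m. \<tau> i)"
  proof -
    have "{1..n} \<inter> {i. i \<le> 2*m} = {1..2*m}" using assms(1) by auto
    then show ?thesis by (simp add: prod.If_cases)
  qed
  finally show ?thesis .
qed

lemma measure_tournament:
  "measure_pmf.prob (tournament n \<tau>) S =
     (\<integral>x. \<integral>y. measure_pmf.prob (winner n x y) {z. (x, y, z) \<in> S} \<partial>freq_dist n \<tau> \<partial>freq_dist n \<tau>)"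
proof -
  have "bind_pmf (winner n x y) (\<lambda>z. return_pmf (x, y, z)) = map_pmf (Pair x \<circ> Pair y) (winner n x y)"
    for x y by (simp add: map_pmf_def o_def)
  then show ?thesis
    by (simp add: tournament_def measure_bind_pmf vimage_def)
qed

definition block_win_bit_prob :: "bool \<times> bool \<Rightarrow> bool \<times> bool \<Rightarrow> real" where
  "block_win_bit_prob b b' = win_bit_prob (block_rank b) (block_rank b') (fst b) (fst b')"

lemma prob_tournament_bit_and_leading:
  assumes "m < n div 2"
  shows "measure_pmf.prob (tournament n \<tau>)
           ({(x, y, z). z (2*m+1)} \<inter> {(x, y, z). min (DLB n x) (DLB n y) \<ge> 2*m})
       = (\<integral>x. \<integral>y. of_bool (leading_blocks_ones m x \<and> leading_blocks_ones m y)
                  * block_win_bit_prob (block m x) (block m y) \<partial>freq_dist n \<tau> \<partial>freq_dist n \<tau>)"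
  unfolding measure_tournament
proof (intro Bochner_Integration.integral_cong refl)
  fix x y
  have DLB_ge: "2*m \<le> DLB n w \<longleftrightarrow> leading_blocks_ones m w" for w
    using DLB_ge_iff assms by simp
  show "measure_pmf.prob (winner n x y)
          {z. (x, y, z) \<in> {(x, y, z). z (2*m+1)} \<inter> {(x, y, z). min (DLB n x) (DLB n y) \<ge> 2*m}}
      = of_bool (leading_blocks_ones m x \<and> leading_blocks_ones m y)
          * block_win_bit_prob (block m x) (block m y)"
  proof (cases "leading_blocks_ones m x \<and> leading_blocks_ones m y")
    case True
    then show ?thesis
      using prob_winner_bit win_bit_prob_at_block[OF assms]
      by (simp add: DLB_ge block_win_bit_prob_def block_def)
  next
    case False
    then show ?thesis by (auto simp: DLB_ge)
  qed
qed

lemma prob_tournament_leading: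
  assumes "2*m+2 \<le> n"
  shows "measure_pmf.prob (tournament n \<tau>) {(x, y, z). min (DLB n x) (DLB n y) \<ge> 2*m}
       = (measure_pmf.prob (freq_dist n \<tau>) {x. leading_blocks_ones m x})\<^sup>2"
proof -
  have DLB_ge: "2*m \<le> DLB n w \<longleftrightarrow> leading_blocks_ones m w" for w
    using DLB_ge_iff assms by simp
  have "measure_pmf.prob (tournament n \<tau>) {(x, y, z). min (DLB n x) (DLB n y) \<ge> 2*m}
      = (\<integral>x. \<integral>y. of_bool (leading_blocks_ones m x \<and> leading_blocks_ones m y)
                  * (\<lambda>_ _. 1) (block m x) (block m y) \<partial>freq_dist n \<tau> \<partial>freq_dist n \<tau>)"
    unfolding measure_tournament by (intro Bochner_Integration.integral_cong refl) (simp add: DLB_ge)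
  also have "\<dots> = (measure_pmf.prob (freq_dist n \<tau>) {x. leading_blocks_ones m x})\<^sup>2"
    using integral_guarded_iid[OF freq_dist_block_indep_leading[OF assms], where F="\<lambda>_ _. 1"]
    by simp
  finally show ?thesis .
qed

lemma integral_block_win_bit_prob:
  assumes "0 \<le> a" "a \<le> 1" "0 \<le> t" "t \<le> 1"
  shows "(\<integral>b. \<integral>b'. block_win_bit_prob b b' \<partial>pair_pmf (bernoulli_pmf a) (bernoulli_pmf t)
           \<partial>pair_pmf (bernoulli_pmf a) (bernoulli_pmf t)) = p_fun a t"
  using assms
  by (simp add: integral_pair_pmf block_win_bit_prob_def win_bit_prob_def p_fun_def
      power2_eq_square field_simps)

lemma five_quarters_le_3t_minus_square:
  fixes t :: real
  assumes "1/2 \<le> t" "t \<le> 1"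
  shows "5/4 \<le> 3*t - t\<^sup>2"
proof -
  have "3*t - t\<^sup>2 - 5/4 = (t - 1/2) * (5/2 - t)"
    by (simp add: power2_eq_square field_simps)
  also have "\<dots> \<ge> 0"
    using assms by (intro mult_nonneg_nonneg) auto
  finally show ?thesis by simp
qed

lemma p_fun_ge_self:
  assumes "0 \<le> a" "a \<le> 1" "1/2 \<le> t" "t \<le> 1"
  shows "a \<le> p_fun a t"
proof -
  have "p_fun a t - a = a * (1 - a) * (3*t - t\<^sup>2 - 1)"
    by (simp add: p_fun_def power2_eq_square algebra_simps)
  also have "\<dots> \<ge> 0"
    using assms five_quarters_le_3t_minus_square[of t] by (intro mult_nonneg_nonneg) auto
  finally show ?thesis by simp
qed

lemma p_fun_half_ge:
  assumes "1/2 \<le> t" "t \<le> 1"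
  shows "9/16 \<le> p_fun (1/2) t"
proof -
  have "p_fun (1/2) t = (3*t - t\<^sup>2 + 1) / 4"
    by (simp add: p_fun_def power2_eq_square field_simps)
  with five_quarters_le_3t_minus_square[OF assms] show ?thesis
    by simp
qed

lemma cond_prob_tournament_bit:
  assumes "2*m+2 \<le> n" "\<forall>i\<in>{1..n}. 0 < \<tau> i \<and> \<tau> i \<le> 1"
  shows "cond_prob (tournament n \<tau>)
           {(x, y, z). z (2*m+1)} {(x, y, z). min (DLB n x) (DLB n y) \<ge> 2*m}
       = p_fun (\<tau> (2*m+1)) (\<tau> (2*m+2))"
proof -
  define \<gamma> where "\<gamma> = measure_pmf.prob (freq_dist n \<tau>) {x. leading_blocks_ones m x}"
  have prefix: "\<forall>i\<in>{1..2*m}. 0 < \<tau> i \<and> \<tau> i \<le> 1"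
    using assms by auto
  then have "\<gamma> = (\<Prod>i=1..2*m. \<tau> i)"
    unfolding \<gamma>_def using assms(1) by (intro prob_leading_blocks_ones) auto
  with prefix have "\<gamma> > 0"
    by (auto intro: prod_pos)
  have "measure_pmf.prob (tournament n \<tau>)
          ({(x, y, z). z (2*m+1)} \<inter> {(x, y, z). min (DLB n x) (DLB n y) \<ge> 2*m})
      = (\<integral>x. \<integral>y. of_bool (leading_blocks_ones m x \<and> leading_blocks_ones m y)
                 * block_win_bit_prob (block m x) (block m y) \<partial>freq_dist n \<tau> \<partial>freq_dist n \<tau>)"
    using assms(1) by (intro prob_tournament_bit_and_leading) simp
  also have "\<dots> = \<gamma>\<^sup>2 * (\<integral>b. \<integral>b'. block_win_bit_prob b b'
                          \<partial>map_pmf (block m) (freq_dist n \<tau>) \<partial>map_pmf (block m) (freq_dist n \<tau>))"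
    unfolding \<gamma>_def by (rule integral_guarded_iid[OF freq_dist_block_indep_leading[OF assms(1)]])
  also have "\<dots> = \<gamma>\<^sup>2 * p_fun (\<tau> (2*m+1)) (\<tau> (2*m+2))"
  proof -
    have "0 < \<tau> (2*m+1) \<and> \<tau> (2*m+1) \<le> 1" "0 < \<tau> (2*m+2) \<and> \<tau> (2*m+2) \<le> 1"
      using assms by auto
    with assms(1) show ?thesis
      by (simp add: freq_dist_block integral_block_win_bit_prob)
  qed
  finally show ?thesis
    using \<open>\<gamma> > 0\<close> prob_tournament_leading[OF assms(1)] by (simp add: cond_prob_def \<gamma>_def)
qed

lemma frequency_bounds:
  assumes "2 \<le> n"
  shows "s \<in> {1 / real n, 1/2, 1 - 1 / real n} \<Longrightarrow> 0 < s \<and> s \<le> 1"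
    and "s \<in> {1/2, 1 - 1 / real n} \<Longrightarrow> 1/2 \<le> s \<and> s \<le> 1"
proof -
  have "0 < 1 / real n" "1 / real n \<le> 1/2"
    using assms by auto
  then show "s \<in> {1 / real n, 1/2, 1 - 1 / real n} \<Longrightarrow> 0 < s \<and> s \<le> 1"
    and "s \<in> {1/2, 1 - 1 / real n} \<Longrightarrow> 1/2 \<le> s \<and> s \<le> 1"
    by auto
qed

theorem lemma21:
  fixes n m :: nat and \<tau> :: "nat \<Rightarrow> real"
  assumes "even n" and "n > 0"
    and "1 \<le> m" and "m \<le> n div 2 - 1"
    and "\<forall>i\<in>{1..n}. \<tau> i \<in> {1 / real n, 1/2, 1 - 1 / real n}"
  shows "cond_prob (tournament n \<tau>)
           {(x, y, z). z (2*m+1)}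
           {(x, y, z). min (DLB n x) (DLB n y) \<ge> 2*m}
         = p_fun (\<tau> (2*m+1)) (\<tau> (2*m+2))
       \<and> (\<tau> (2*m+1) \<in> {1/2, 1 - 1 / real n} \<and> \<tau> (2*m+2) \<in> {1/2, 1 - 1 / real n}
         \<longrightarrow> p_fun (\<tau> (2*m+1)) (\<tau> (2*m+2)) \<ge> \<tau> (2*m+1))
       \<and> (\<tau> (2*m+1) = 1/2 \<and> \<tau> (2*m+2) \<in> {1/2, 1 - 1 / real n}
         \<longrightarrow> p_fun (\<tau> (2*m+1)) (\<tau> (2*m+2)) \<ge> 9/16)"
proof -
  have m: "2*m+2 \<le> n"
    using assms(1-4) by auto
  then have "\<forall>i\<in>{1..n}. 0 < \<tau> i \<and> \<tau> i \<le> 1"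
    using assms(5) frequency_bounds(1)[of n] by auto
  then have "cond_prob (tournament n \<tau>) {(x, y, z). z (2*m+1)}
      {(x, y, z). min (DLB n x) (DLB n y) \<ge> 2*m} = p_fun (\<tau> (2*m+1)) (\<tau> (2*m+2))"
    by (rule cond_prob_tournament_bit[OF m])
  moreover have "\<tau> (2*m+1) \<le> p_fun (\<tau> (2*m+1)) (\<tau> (2*m+2))"
    if "\<tau> (2*m+1) \<in> {1/2, 1 - 1 / real n}" "\<tau> (2*m+2) \<in> {1/2, 1 - 1 / real n}"
    using frequency_bounds(2)[OF _ that(1)] frequency_bounds(2)[OF _ that(2)] m
    by (intro p_fun_ge_self) auto
  moreover have "9/16 \<le> p_fun (\<tau> (2*m+1)) (\<tau> (2*m+2))"
    if "\<tau> (2*m+1) = 1/2" "\<tau> (2*m+2) \<in> {1/2, 1 - 1 / real n}"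
    unfolding that(1) using frequency_bounds(2)[OF _ that(2)] m
    by (intro p_fun_half_ge) auto
  ultimately show ?thesis
    by blast
qed

end
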